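(* Let $X_1,\dots,X_N$ be i.i.d. with distribution function $F$, $0<\alpha<\beta<1$, and suppose $f=F'$ exists in neighborhoods of $\xi_\alpha$ and $\xi_\beta$, satisfies a Lipschitz condition there, and $f(\xi_\alpha)>0$, $f(\xi_\beta)>0$. Let $r$ be a positive integer, $\mu_{r,W}=EW_1^r$ and $\hat\mu_{r,W}=\frac kNX_{k:N}^r+\frac1N\sum_{i=k+1}^{m-1}X_{i:N}^r+\frac{N-m+1}NX_{m:N}^r$. Then for every $c>0$ there is $A>0$ not depending on $N$ with $$P\big(|\hat\mu_{r,W}-\mu_{r,W}|>A(\log N/N)^{1/2}\big)=O(N^{-c})\quad\text{as }N\to\infty.$$
   Context: $X_{1:N}\le\dots\le X_{N:N}$ are the order statistics, $k=[\alpha N]+1$, $m=[\beta N]$ ($[\cdot]$ integer part), $\xi_\nu=F^{-1}(\nu)$ with $F^{-1}(u)=\inf\{x:F(x)\ge u\}$. $W_1$ is $X_1$ Winsorized outside $(\xi_\alpha,\xi_\beta]$: $W_1=\xi_\alpha$ if $X_1\le\xi_\alpha$, $W_1=X_1$ if $\xi_\alpha<X_1\le\xi_\beta$, $W_1=\xi_\beta$ if $X_1>\xi_\beta$. *)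

theory Defs
  imports "HOL-Probability.Probability" "HOL-Library.Landau_Symbols"
begin

definition quantile :: "(real \<Rightarrow> real) \<Rightarrow> real \<Rightarrow> real" where
  "quantile F u = Inf {x. F x \<ge> u}"

text \<open>i-th order statistic (1-based) X_{i:N} of the sample X 1, ..., X N.\<close>
definition order_stat :: "(nat \<Rightarrow> 'a \<Rightarrow> real) \<Rightarrow> nat \<Rightarrow> nat \<Rightarrow> 'a \<Rightarrow> real" where
  "order_stat X N i \<omega> = sort (map (\<lambda>j. X j \<omega>) [1..<N+1]) ! (i - 1)"

definition winsor :: "real \<Rightarrow> real \<Rightarrow> real \<Rightarrow> real" where
  "winsor a b x = (if x \<le> a then a else if x \<le> b then x else b)"

definition winsor_moment_est ::
  "(nat \<Rightarrow> 'a \<Rightarrow> real) \<Rightarrow> real \<Rightarrow> real \<Rightarrow> nat \<Rightarrow> nat \<Rightarrow> 'a \<Rightarrow> real" where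
  "winsor_moment_est X \<alpha> \<beta> r N \<omega> =
     (let k = nat \<lfloor>\<alpha> * real N\<rfloor> + 1; m = nat \<lfloor>\<beta> * real N\<rfloor> in
        real k / real N * order_stat X N k \<omega> ^ r
      + 1 / real N * (\<Sum>i\<in>{k+1..m-1}. order_stat X N i \<omega> ^ r)
      + real (N - m + 1) / real N * order_stat X N m \<omega> ^ r)"

end

(*
  Sorting shows that the estimator is exactly the mean of the sample Winsorized at the
  empirical quantiles X_{k:N}, X_{m:N}: the weights k/N and (N-m+1)/N count the clipped points.
  Where F has a positive derivative at xi, it grows at least linearly away from xi, so Hoeffding's
  inequality for the empirical distribution function at xi +- t keeps the sample quantiles within t
  of xi_alpha and xi_beta, except on an event of probability exp(-const N t^2). On the complement,
  Winsorizing at the sample rather than the true quantiles moves every summand by O(t), and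
  Hoeffding's inequality for the bounded variables W_j^r controls the remaining deviation from
  mu_{r,W}. The choice t = C (log N / N)^(1/2) with C large turns every exponential bound into N^(-c).
*)
theory Submission
  imports Defs "HOL-Real_Asymp.Real_Asymp"
begin

definition empirical_cdf :: "(nat \<Rightarrow> 'a \<Rightarrow> real) \<Rightarrow> nat \<Rightarrow> real \<Rightarrow> 'a \<Rightarrow> real" where
  "empirical_cdf X N x \<omega> = (\<Sum>j\<in>{1..N}. of_bool (X j \<omega> \<le> x)) / real N"

text \<open>The positivity of the density at a quantile is used only through this local linear
  growth of the distribution function around it.\<close>
definition quantile_growth :: "(real \<Rightarrow> real) \<Rightarrow> real \<Rightarrow> real \<Rightarrow> real \<Rightarrow> real \<Rightarrow> bool" where
  "quantile_growth F u q d \<delta> \<longleftrightarrow>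
     (\<forall>t. 0 < t \<longrightarrow> t < \<delta> \<longrightarrow> u + d * t \<le> F (q + t) \<and> F (q - t) \<le> u - d * t)"

section \<open>Order statistics\<close>

lemma sort_nth_le_iff_length_filter:
  fixes xs :: "'b::linorder list"
  assumes "1 \<le> k" "k \<le> length xs"
  shows "sort xs ! (k - 1) \<le> x \<longleftrightarrow> k \<le> length (filter (\<lambda>v. v \<le> x) xs)"
proof -
  define ys where "ys = sort xs"
  have sorted: "sorted ys" and len: "length ys = length xs" by (auto simp: ys_def)
  have "length (filter (\<lambda>v. v \<le> x) xs) = length (filter (\<lambda>v. v \<le> x) ys)"
    unfolding ys_def by (metis mset_filter mset_sort size_mset)
  also have "\<dots> = card {i. i < length ys \<and> ys ! i \<le> x}" by (rule length_filter_conv_card)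
  finally have count: "length (filter (\<lambda>v. v \<le> x) xs) = card {i. i < length ys \<and> ys ! i \<le> x}" .
  show ?thesis
  proof
    assume le: "sort xs ! (k - 1) \<le> x"
    have "{..<k} \<subseteq> {i. i < length ys \<and> ys ! i \<le> x}"
    proof
      fix i assume "i \<in> {..<k}"
      then have "i \<le> k - 1" "i < length ys" using assms len by auto
      then have "ys ! i \<le> ys ! (k - 1)" using sorted assms len by (intro sorted_nth_mono) auto
      then show "i \<in> {i. i < length ys \<and> ys ! i \<le> x}"
        using le \<open>i < length ys\<close> by (auto simp: ys_def)
    qed
    from card_mono[OF _ this] show "k \<le> length (filter (\<lambda>v. v \<le> x) xs)" unfolding count by auto
  next
    assume k: "k \<le> length (filter (\<lambda>v. v \<le> x) xs)"
    show "sort xs ! (k - 1) \<le> x"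
    proof (rule ccontr)
      assume "\<not> ?thesis"
      then have gt: "x < ys ! (k - 1)" by (simp add: ys_def)
      have "{i. i < length ys \<and> ys ! i \<le> x} \<subseteq> {..<k - 1}"
      proof
        fix i assume i: "i \<in> {i. i < length ys \<and> ys ! i \<le> x}"
        show "i \<in> {..<k - 1}"
        proof (rule ccontr)
          assume "i \<notin> {..<k - 1}"
          then have "ys ! (k - 1) \<le> ys ! i" using sorted i by (intro sorted_nth_mono) auto
          then show False using gt i by auto
        qed
      qed
      from card_mono[OF _ this] show False using k count assms by simp
    qed
  qed
qed

lemma order_stat_le_iff:
  assumes "1 \<le> k" "k \<le> N"
  shows "order_stat X N k \<omega> \<le> x \<longleftrightarrow> real k \<le> real N * empirical_cdf X N x \<omega>"
proof -
  have "length (filter (\<lambda>v. v \<le> x) (map (\<lambda>j. X j \<omega>) [1..<N+1]))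
      = length (filter (\<lambda>j. X j \<omega> \<le> x) [1..<N+1])"
    by (simp add: filter_map o_def)
  also have "\<dots> = card ({1..N} \<inter> {j. X j \<omega> \<le> x})"
  proof (subst distinct_length_filter)
    show "card ({j. X j \<omega> \<le> x} \<inter> set [1..<N+1]) = card ({1..N} \<inter> {j. X j \<omega> \<le> x})"
      by (rule arg_cong[where f = card]) auto
  qed simp
  also have "real \<dots> = real N * empirical_cdf X N x \<omega>"
    using assms by (simp add: empirical_cdf_def)
  finally show ?thesis
    unfolding order_stat_def using sort_nth_le_iff_length_filter[of k _ x] assms
    by (metis length_map length_upt diff_add_inverse2 of_nat_le_iff)
qed

lemma order_stat_mono:
  assumes "1 \<le> k" "k \<le> m" "m \<le> N"
  shows "order_stat X N k \<omega> \<le> order_stat X N m \<omega>"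
  unfolding order_stat_def using assms by (intro sorted_nth_mono) auto

lemma sum_winsor_power_sorted:
  fixes ys :: "real list"
  assumes sorted: "sorted ys" and len: "length ys = N" and km: "1 \<le> k" "k < m" "m \<le> N"
  shows "(\<Sum>i<N. winsor (ys ! (k - 1)) (ys ! (m - 1)) (ys ! i) ^ r) =
     real k * ys ! (k - 1) ^ r + (\<Sum>i\<in>{k+1..m-1}. ys ! (i - 1) ^ r) + real (N - m + 1) * ys ! (m - 1) ^ r"
proof -
  define c where "c = ys ! (k - 1)"
  define d where "d = ys ! (m - 1)"
  have nth_mono: "i \<le> j \<Longrightarrow> j < N \<Longrightarrow> ys ! i \<le> ys ! j" for i j
    using sorted len by (intro sorted_nth_mono) auto
  have low: "winsor c d (ys ! i) = c" if "i < k" for i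
    using that km nth_mono[of i "k - 1"] by (simp add: winsor_def c_def)
  have mid: "winsor c d (ys ! i) = ys ! i" if "k \<le> i" "i < m - 1" for i
  proof -
    have "c \<le> ys ! i" "ys ! i \<le> d"
      using that km by (auto simp: c_def d_def intro!: nth_mono)
    then show ?thesis by (auto simp: winsor_def)
  qed
  have high: "winsor c d (ys ! i) = d" if "m - 1 \<le> i" "i < N" for i
  proof -
    have "c \<le> d" "d \<le> ys ! i"
      using that km by (auto simp: c_def d_def intro!: nth_mono)
    then show ?thesis by (auto simp: winsor_def)
  qed
  have "(\<Sum>i<N. winsor c d (ys ! i) ^ r) = (\<Sum>i<k. winsor c d (ys ! i) ^ r)
      + (\<Sum>i\<in>{k..<m-1}. winsor c d (ys ! i) ^ r) + (\<Sum>i\<in>{m-1..<N}. winsor c d (ys ! i) ^ r)"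
    unfolding lessThan_atLeast0 using km by (simp add: sum.atLeastLessThan_concat)
  also have "\<dots> = (\<Sum>i<k. c ^ r) + (\<Sum>i\<in>{k..<m-1}. ys ! i ^ r) + (\<Sum>i\<in>{m-1..<N}. d ^ r)"
    using low mid high by simp
  also have "(\<Sum>i\<in>{k..<m-1}. ys ! i ^ r) = (\<Sum>i\<in>{k+1..m-1}. ys ! (i - 1) ^ r)"
    using km by (intro sum.reindex_bij_witness[where i = "\<lambda>i. i - 1" and j = Suc]) auto
  finally show ?thesis using km by (simp add: c_def d_def of_nat_diff)
qed

lemma winsor_moment_est_eq_mean_winsor:
  fixes \<alpha> \<beta> :: real and N :: nat
  defines "k \<equiv> nat \<lfloor>\<alpha> * real N\<rfloor> + 1" and "m \<equiv> nat \<lfloor>\<beta> * real N\<rfloor>"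
  assumes "k < m" "m \<le> N"
  shows "winsor_moment_est X \<alpha> \<beta> r N \<omega> =
    (\<Sum>j\<in>{1..N}. winsor (order_stat X N k \<omega>) (order_stat X N m \<omega>) (X j \<omega>) ^ r) / real N"
proof -
  define xs where "xs = map (\<lambda>j. X j \<omega>) [1..<N+1]"
  define ys where "ys = sort xs"
  define g where "g = (\<lambda>v. winsor (ys ! (k - 1)) (ys ! (m - 1)) v ^ r)"
  have order_stat: "order_stat X N i \<omega> = ys ! (i - 1)" for i
    by (simp add: order_stat_def ys_def xs_def)
  have "(\<Sum>j\<in>{1..N}. g (X j \<omega>)) = sum_list (map g xs)"
    unfolding xs_def map_map o_def
    by (subst interv_sum_list_conv_sum_set_nat) (auto intro: sum.cong)
  also have "\<dots> = sum_list (map g ys)"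
    unfolding ys_def by (metis mset_map mset_sort sum_mset_sum_list)
  also have "\<dots> = (\<Sum>i<N. g (ys ! i))"
  proof -
    have "length ys = N" by (simp add: ys_def xs_def)
    then show ?thesis by (simp add: sum_list_sum_nth atLeast0LessThan)
  qed
  also have "\<dots> = real k * ys ! (k - 1) ^ r + (\<Sum>i\<in>{k+1..m-1}. ys ! (i - 1) ^ r)
      + real (N - m + 1) * ys ! (m - 1) ^ r"
    unfolding g_def using assms by (intro sum_winsor_power_sorted) (auto simp: ys_def xs_def k_def)
  finally have "(\<Sum>j\<in>{1..N}. g (X j \<omega>)) = \<dots>" .
  moreover have "N > 0" using assms by linarith
  ultimately show ?thesis
    unfolding winsor_moment_est_def Let_def k_def[symmetric] m_def[symmetric] order_stat g_def
    by (simp add: field_simps)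
qed

lemma order_stat_close_to_quantile:
  fixes G :: "real \<Rightarrow> real"
  assumes "1 \<le> k" "k \<le> N" "N * u - 1 < k" "k \<le> N * u + 1" "1 \<le> N * e"
    and "u + 2 * e \<le> G (q + t)" "G (q - t) \<le> u - 2 * e"
    and "\<bar>empirical_cdf X N (q + t) \<omega> - G (q + t)\<bar> < e"
    and "\<bar>empirical_cdf X N (q - t) \<omega> - G (q - t)\<bar> < e"
  shows "\<bar>order_stat X N k \<omega> - q\<bar> \<le> t"
proof -
  have N: "0 < real N" using assms(1,2) by linarith
  have "real N * (u + e) < real N * empirical_cdf X N (q + t) \<omega>"
    using assms(6,8) N by (intro mult_strict_left_mono) linarith+
  then have "real k \<le> real N * empirical_cdf X N (q + t) \<omega>"
    using assms(4,5) unfolding distrib_left by linarith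
  then have "order_stat X N k \<omega> \<le> q + t"
    by (simp add: order_stat_le_iff[OF assms(1,2)])
  moreover have "real N * empirical_cdf X N (q - t) \<omega> < real N * (u - e)"
    using assms(7,9) N by (intro mult_strict_left_mono) linarith+
  then have "\<not> real k \<le> real N * empirical_cdf X N (q - t) \<omega>"
    using assms(3,5) unfolding right_diff_distrib by linarith
  then have "\<not> order_stat X N k \<omega> \<le> q - t"
    by (simp add: order_stat_le_iff[OF assms(1,2)])
  ultimately show ?thesis by linarith
qed

section \<open>Winsorization\<close>

lemma winsor_dist_le:
  assumes "a \<le> b" "c \<le> d"
  shows "\<bar>winsor c d x - winsor a b x\<bar> \<le> max \<bar>c - a\<bar> \<bar>d - b\<bar>"
  using assms unfolding winsor_def by (auto simp: abs_if max_def)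

lemma abs_winsor_le:
  assumes "a \<le> b"
  shows "\<bar>winsor a b x\<bar> \<le> max \<bar>a\<bar> \<bar>b\<bar>"
  using assms unfolding winsor_def by (auto simp: abs_if max_def)

lemma abs_power_diff_le:
  fixes x y B :: real
  assumes "\<bar>x\<bar> \<le> B" "\<bar>y\<bar> \<le> B"
  shows "\<bar>x ^ r - y ^ r\<bar> \<le> real r * B ^ (r - 1) * \<bar>x - y\<bar>"
proof -
  have "\<bar>y ^ (r - Suc i) * x ^ i\<bar> \<le> B ^ (r - 1)" if "i < r" for i
  proof -
    have "\<bar>y ^ (r - Suc i) * x ^ i\<bar> = \<bar>y\<bar> ^ (r - Suc i) * \<bar>x\<bar> ^ i"
      by (simp add: abs_mult power_abs)
    also have "\<dots> \<le> B ^ (r - Suc i) * B ^ i"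
      using assms by (intro mult_mono power_mono) auto
    also have "\<dots> = B ^ (r - 1)" using that by (simp flip: power_add)
    finally show ?thesis .
  qed
  then have "(\<Sum>i<r. \<bar>y ^ (r - Suc i) * x ^ i\<bar>) \<le> (\<Sum>i<r. B ^ (r - 1))"
    by (intro sum_mono) auto
  then have "\<bar>\<Sum>i<r. y ^ (r - Suc i) * x ^ i\<bar> \<le> real r * B ^ (r - 1)"
    by (simp add: order_trans[OF sum_abs])
  then have "\<bar>x - y\<bar> * \<bar>\<Sum>i<r. y ^ (r - Suc i) * x ^ i\<bar> \<le> \<bar>x - y\<bar> * (real r * B ^ (r - 1))"
    by (intro mult_left_mono) auto
  then show ?thesis by (simp add: power_diff_sumr2 abs_mult mult_ac)
qed

lemma winsor_power_diff_le:
  assumes "a \<le> b" "c \<le> d" "\<bar>c - a\<bar> \<le> t" "\<bar>d - b\<bar> \<le> t" "max \<bar>a\<bar> \<bar>b\<bar> + t \<le> B"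
  shows "\<bar>winsor c d x ^ r - winsor a b x ^ r\<bar> \<le> real r * B ^ (r - 1) * t"
proof -
  have "\<bar>winsor c d x\<bar> \<le> B"
    using abs_winsor_le[OF \<open>c \<le> d\<close>, of x] assms(3-5) by linarith
  moreover have "\<bar>winsor a b x\<bar> \<le> B"
    using abs_winsor_le[OF \<open>a \<le> b\<close>, of x] assms(3-5) by linarith
  ultimately have "\<bar>winsor c d x ^ r - winsor a b x ^ r\<bar>
      \<le> real r * B ^ (r - 1) * \<bar>winsor c d x - winsor a b x\<bar>"
    by (rule abs_power_diff_le)
  also have "\<dots> \<le> real r * B ^ (r - 1) * t"
  proof (intro mult_left_mono)
    show "\<bar>winsor c d x - winsor a b x\<bar> \<le> t"
      using winsor_dist_le[OF assms(1,2), of x] assms(3,4) by linarith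
    have "0 \<le> B" using assms(3,5) by linarith
    then show "0 \<le> real r * B ^ (r - 1)" by simp
  qed
  finally show ?thesis .
qed

lemma winsor_moment_est_deviation_le:
  fixes \<alpha> \<beta> :: real and N :: nat
  defines "k \<equiv> nat \<lfloor>\<alpha> * real N\<rfloor> + 1" and "m \<equiv> nat \<lfloor>\<beta> * real N\<rfloor>"
  assumes "k < m" "m \<le> N" "a \<le> b" "max \<bar>a\<bar> \<bar>b\<bar> + t \<le> B"
    and "\<bar>order_stat X N k \<omega> - a\<bar> \<le> t" "\<bar>order_stat X N m \<omega> - b\<bar> \<le> t"
    and "\<bar>(\<Sum>j\<in>{1..N}. winsor a b (X j \<omega>) ^ r) / real N - \<mu>\<bar> \<le> t"
  shows "\<bar>winsor_moment_est X \<alpha> \<beta> r N \<omega> - \<mu>\<bar> \<le> (real r * B ^ (r - 1) + 1) * t"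
proof -
  define c where "c = order_stat X N k \<omega>"
  define d where "d = order_stat X N m \<omega>"
  have N: "0 < real N" using assms(3,4) by linarith
  have "c \<le> d" unfolding c_def d_def using assms(3,4) by (intro order_stat_mono) (auto simp: k_def)
  then have "\<bar>winsor c d (X j \<omega>) ^ r - winsor a b (X j \<omega>) ^ r\<bar> \<le> real r * B ^ (r - 1) * t" for j
    using assms(5-8) by (intro winsor_power_diff_le) (auto simp: c_def d_def)
  then have "\<bar>\<Sum>j\<in>{1..N}. winsor c d (X j \<omega>) ^ r - winsor a b (X j \<omega>) ^ r\<bar>
      \<le> (\<Sum>j\<in>{1..N}. real r * B ^ (r - 1) * t)"
    by (intro order_trans[OF sum_abs] sum_mono)
  then have "\<bar>\<Sum>j\<in>{1..N}. winsor c d (X j \<omega>) ^ r - winsor a b (X j \<omega>) ^ r\<bar>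
      \<le> real N * (real r * B ^ (r - 1) * t)"
    by simp
  moreover have "winsor_moment_est X \<alpha> \<beta> r N \<omega> - (\<Sum>j\<in>{1..N}. winsor a b (X j \<omega>) ^ r) / real N
      = (\<Sum>j\<in>{1..N}. winsor c d (X j \<omega>) ^ r - winsor a b (X j \<omega>) ^ r) / real N"
    using assms(3,4) unfolding c_def d_def k_def m_def
    by (simp add: winsor_moment_est_eq_mean_winsor sum_subtractf diff_divide_distrib)
  ultimately have "\<bar>winsor_moment_est X \<alpha> \<beta> r N \<omega> - (\<Sum>j\<in>{1..N}. winsor a b (X j \<omega>) ^ r) / real N\<bar>
      \<le> real r * B ^ (r - 1) * t"
    using N by (simp add: abs_divide divide_le_eq mult.commute)
  then show ?thesis using assms(9) by (simp add: algebra_simps)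
qed

section \<open>Quantiles\<close>

lemma continuous_at_quantile_eq:
  fixes F :: "real \<Rightarrow> real"
  assumes mono: "mono F" and cont: "isCont F (quantile F u)"
    and "\<exists>x. u \<le> F x" and "\<exists>x. F x < u"
  shows "F (quantile F u) = u"
proof -
  define S where "S = {x. u \<le> F x}"
  define q where "q = quantile F u"
  obtain x0 where x0: "F x0 < u" using assms(4) by blast
  have "S \<noteq> {}" using assms(3) by (auto simp: S_def)
  have "bdd_below S"
  proof (rule bdd_belowI)
    fix s assume "s \<in> S"
    show "x0 \<le> s"
    proof (rule ccontr)
      assume "\<not> x0 \<le> s"
      then have "F s \<le> F x0" using monoD[OF mono, of s x0] by simp
      then show False using \<open>s \<in> S\<close> x0 by (simp add: S_def)
    qed
  qed
  have above: "u \<le> F y" if "q < y" for y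
  proof -
    obtain s where "s \<in> S" "s < y"
      using \<open>q < y\<close> cInf_less_iff[OF \<open>S \<noteq> {}\<close> \<open>bdd_below S\<close>] by (auto simp: q_def quantile_def S_def)
    then show ?thesis using monoD[OF mono, of s y] by (simp add: S_def)
  qed
  have below: "F y \<le> u" if "y < q" for y
  proof -
    have "y \<notin> S"
      using that cInf_lower[OF _ \<open>bdd_below S\<close>, of y] by (auto simp: q_def quantile_def S_def)
    then show ?thesis by (simp add: S_def)
  qed
  have lim: "(F \<longlongrightarrow> F q) (at q)" using cont by (simp add: q_def isCont_def)
  have "eventually (\<lambda>y. u \<le> F y) (at_right q)"
    by (rule eventually_at_rightI[where b = "q + 1"]) (simp_all add: above)
  with tendsto_mono[OF at_within_le_at lim] have "u \<le> F q"
    by (rule tendsto_lowerbound) simp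
  moreover
  have "eventually (\<lambda>y. F y \<le> u) (at_left q)"
    by (rule eventually_at_leftI[where a = "q - 1"]) (simp_all add: below)
  with tendsto_mono[OF at_within_le_at lim] have "F q \<le> u"
    by (rule tendsto_upperbound) simp
  ultimately show ?thesis by (simp add: q_def)
qed

lemma quantile_growth_mono:
  assumes "quantile_growth F u q d \<delta>" "d' \<le> d" "\<delta>' \<le> \<delta>"
  shows "quantile_growth F u q d' \<delta>'"
  unfolding quantile_growth_def
proof (intro allI impI)
  fix t :: real assume t: "0 < t" "t < \<delta>'"
  have "d' * t \<le> d * t" using t assms(2) by (intro mult_right_mono) auto
  moreover have "u + d * t \<le> F (q + t) \<and> F (q - t) \<le> u - d * t"
    using assms(1,3) t unfolding quantile_growth_def by simp
  ultimately show "u + d' * t \<le> F (q + t) \<and> F (q - t) \<le> u - d' * t" by linarith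
qed

lemma quantile_growth_if_deriv:
  fixes F :: "real \<Rightarrow> real"
  assumes mono: "mono F" and deriv: "(F has_real_derivative d) (at (quantile F u))" and "0 < d"
    and "\<exists>x. u \<le> F x" and "\<exists>x. F x < u"
  shows "\<exists>\<delta>>0. quantile_growth F u (quantile F u) (d / 2) \<delta>"
proof -
  define q where "q = quantile F u"
  have Fq: "F q = u"
    unfolding q_def using assms by (intro continuous_at_quantile_eq DERIV_isCont)
  \<comment> \<open>subtracting the line of slope d/2 keeps a positive derivative at q\<close>
  define G where "G x = F x - d / 2 * x" for x
  have "(G has_real_derivative d - d / 2 * 1) (at q)"
    unfolding G_def q_def by (intro DERIV_diff deriv DERIV_cmult DERIV_ident)
  then have G': "(G has_real_derivative d / 2) (at q)" by simp
  obtain \<delta>1 where "0 < \<delta>1" and \<delta>1: "\<forall>t>0. t < \<delta>1 \<longrightarrow> G q < G (q + t)"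
    using DERIV_pos_inc_right[OF G'] \<open>0 < d\<close> by auto
  obtain \<delta>2 where "0 < \<delta>2" and \<delta>2: "\<forall>t>0. t < \<delta>2 \<longrightarrow> G (q - t) < G q"
    using DERIV_pos_inc_left[OF G'] \<open>0 < d\<close> by auto
  have "quantile_growth F u q (d / 2) (min \<delta>1 \<delta>2)"
    unfolding quantile_growth_def
  proof (intro allI impI)
    fix t :: real assume t: "0 < t" "t < min \<delta>1 \<delta>2"
    then have "G q < G (q + t)" "G (q - t) < G q" using \<delta>1 \<delta>2 by auto
    then show "u + d / 2 * t \<le> F (q + t) \<and> F (q - t) \<le> u - d / 2 * t"
      unfolding G_def Fq[symmetric] by (simp add: field_simps)
  qed
  then show ?thesis
    using \<open>0 < \<delta>1\<close> \<open>0 < \<delta>2\<close> by (intro exI[of _ "min \<delta>1 \<delta>2"]) (simp add: q_def)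
qed

lemma quantile_growth_le:
  fixes F :: "real \<Rightarrow> real"
  assumes "mono F" "quantile_growth F \<alpha> a d \<delta>" "quantile_growth F \<beta> b d \<delta>"
    and "\<alpha> < \<beta>" "0 \<le> d" "0 < \<delta>"
  shows "a \<le> b"
proof (rule ccontr)
  assume "\<not> a \<le> b"
  define t where "t = min (\<delta> / 2) ((a - b) / 2)"
  have t_pos: "0 < t" using \<open>0 < \<delta>\<close> \<open>\<not> a \<le> b\<close> by (simp add: t_def)
  have "t \<le> \<delta> / 2" "t \<le> (a - b) / 2"
    unfolding t_def by (rule min.cobounded1, rule min.cobounded2)
  then have "t < \<delta>" and t_sep: "b + t \<le> a - t"
    using \<open>0 < \<delta>\<close> by simp_all
  have "F (b + t) \<le> F (a - t)" using monoD[OF \<open>mono F\<close> t_sep] .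
  moreover have "0 \<le> d * t" using \<open>0 \<le> d\<close> t_pos by simp
  moreover have "F (a - t) \<le> \<alpha> - d * t" "\<beta> + d * t \<le> F (b + t)"
    using assms(2,3) t_pos \<open>t < \<delta>\<close> unfolding quantile_growth_def by auto
  ultimately show False using \<open>\<alpha> < \<beta>\<close> by linarith
qed

lemma winsor_moment_est_close:
  fixes \<alpha> \<beta> a b d \<delta> t \<mu> :: real and N r :: nat and F :: "real \<Rightarrow> real"
  assumes growth_a: "quantile_growth F \<alpha> a d \<delta>" and growth_b: "quantile_growth F \<beta> b d \<delta>"
    and "a \<le> b" "0 \<le> \<alpha>" "\<alpha> \<le> \<beta>" "\<beta> \<le> 1"
    and km: "nat \<lfloor>\<alpha> * real N\<rfloor> + 1 < nat \<lfloor>\<beta> * real N\<rfloor>"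
    and t: "0 < t" "t < \<delta>" "t \<le> 1" "2 \<le> real N * d * t"
    and mean_close: "\<bar>(\<Sum>j\<in>{1..N}. winsor a b (X j \<omega>) ^ r) / real N - \<mu>\<bar> \<le> t"
    and cdf_close: "\<And>x. x \<in> {a + t, a - t, b + t, b - t} \<Longrightarrow>
      \<bar>empirical_cdf X N x \<omega> - F x\<bar> < d * t / 2"
  shows "\<bar>winsor_moment_est X \<alpha> \<beta> r N \<omega> - \<mu>\<bar> \<le> (real r * (max \<bar>a\<bar> \<bar>b\<bar> + 1) ^ (r - 1) + 1) * t"
proof -
  define k where "k = nat \<lfloor>\<alpha> * real N\<rfloor> + 1"
  define m where "m = nat \<lfloor>\<beta> * real N\<rfloor>"
  have "0 \<le> \<alpha> * real N" "0 \<le> \<beta> * real N" using \<open>0 \<le> \<alpha>\<close> \<open>\<alpha> \<le> \<beta>\<close> by auto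
  then have k_bounds: "real N * \<alpha> - 1 < k" "k \<le> real N * \<alpha> + 1"
    and m_bounds: "real N * \<beta> - 1 < m" "m \<le> real N * \<beta> + 1" "m \<le> real N * \<beta>"
    unfolding k_def m_def by (auto simp: of_nat_nat mult.commute) linarith+
  have "k < m" using km by (simp add: k_def m_def)
  have "m \<le> N"
    using m_bounds(3) \<open>\<beta> \<le> 1\<close> mult_left_le[of \<beta> "real N"] by simp
  have "\<bar>order_stat X N k \<omega> - a\<bar> \<le> t"
    using growth_a t k_bounds \<open>k < m\<close> \<open>m \<le> N\<close>
    by (intro order_stat_close_to_quantile[where e = "d * t / 2" and G = F and u = \<alpha>] cdf_close)
      (auto simp: quantile_growth_def k_def)
  moreover have "\<bar>order_stat X N m \<omega> - b\<bar> \<le> t"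
    using growth_b t m_bounds \<open>k < m\<close> \<open>m \<le> N\<close>
    by (intro order_stat_close_to_quantile[where e = "d * t / 2" and G = F and u = \<beta>] cdf_close)
      (auto simp: quantile_growth_def k_def)
  ultimately show ?thesis
    using \<open>k < m\<close> \<open>m \<le> N\<close> \<open>a \<le> b\<close> t(3) mean_close
    unfolding k_def m_def by (intro winsor_moment_est_deviation_le) auto
qed

lemma exp_le_powr_neg:
  fixes x c y :: real
  assumes "0 < x" "y \<le> - (c * ln x)"
  shows "exp y \<le> x powr (- c)"
  using assms by (simp add: powr_def)

lemma eventually_floor_mult_less:
  assumes "0 \<le> \<alpha>" "\<alpha> < \<beta>"
  shows "eventually (\<lambda>N::nat. nat \<lfloor>\<alpha> * real N\<rfloor> + 1 < nat \<lfloor>\<beta> * real N\<rfloor>) sequentially"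
  using eventually_ge_at_top[of "nat \<lceil>3 / (\<beta> - \<alpha>)\<rceil>"]
proof (rule eventually_mono)
  fix N :: nat assume "nat \<lceil>3 / (\<beta> - \<alpha>)\<rceil> \<le> N"
  then have "3 / (\<beta> - \<alpha>) \<le> real N" by linarith
  then have "3 \<le> (\<beta> - \<alpha>) * real N" using assms by (simp add: field_simps)
  moreover have "real (nat \<lfloor>\<alpha> * real N\<rfloor>) \<le> \<alpha> * real N" "\<beta> * real N - 1 < real (nat \<lfloor>\<beta> * real N\<rfloor>)"
    using assms by (auto simp: of_nat_nat)
  ultimately show "nat \<lfloor>\<alpha> * real N\<rfloor> + 1 < nat \<lfloor>\<beta> * real N\<rfloor>"
    by (simp add: algebra_simps)
qed

lemma tendsto_sqrt_ln_div: "((\<lambda>N::nat. sqrt (ln (real N) / real N)) \<longlongrightarrow> 0) sequentially"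
  by real_asymp

lemma filterlim_mult_sqrt_ln_div: "filterlim (\<lambda>N::nat. real N * sqrt (ln (real N) / real N)) at_top sequentially"
  by real_asymp

section \<open>Independent samples\<close>

locale iid_sample = prob_space +
  fixes X :: "nat \<Rightarrow> 'a \<Rightarrow> real" and F :: "real \<Rightarrow> real"
  assumes indep: "indep_vars (\<lambda>_. borel) X {1..}"
    and cdf_eq: "\<And>i x. 1 \<le> i \<Longrightarrow> prob {\<omega> \<in> space M. X i \<omega> \<le> x} = F x"
begin

lemma random_variable_X [measurable]: "1 \<le> i \<Longrightarrow> random_variable borel (X i)"
  using indep unfolding indep_vars_def by auto

lemma cdf_distr_X: "1 \<le> i \<Longrightarrow> cdf (distr M borel (X i)) = F"
proof
  fix x assume "1 \<le> i"
  have "cdf (distr M borel (X i)) x = prob (X i -` {..x} \<inter> space M)"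
    unfolding cdf_def using \<open>1 \<le> i\<close> by (subst measure_distr) auto
  also have "X i -` {..x} \<inter> space M = {\<omega> \<in> space M. X i \<omega> \<le> x}" by auto
  finally show "cdf (distr M borel (X i)) x = F x" using cdf_eq[OF \<open>1 \<le> i\<close>] by simp
qed

lemma distr_X_eq: "1 \<le> i \<Longrightarrow> distr M borel (X i) = distr M borel (X 1)"
  by (rule cdf_unique) (simp_all add: cdf_distr_X real_distribution_distr)

lemma mono_F: "mono F"
proof (rule monoI)
  fix x y :: real assume "x \<le> y"
  then have "prob {\<omega> \<in> space M. X 1 \<omega> \<le> x} \<le> prob {\<omega> \<in> space M. X 1 \<omega> \<le> y}"
    by (intro finite_measure_mono) auto
  then show "F x \<le> F y" by (simp add: cdf_eq)
qed

lemma ex_F_ge: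
  assumes "u < 1" shows "\<exists>x. u \<le> F x"
proof -
  interpret D: real_distribution "distr M borel (X 1)" by simp
  have "(F \<longlongrightarrow> 1) at_top" using D.cdf_lim_at_top_prob cdf_distr_X[of 1] by simp
  then have "eventually (\<lambda>x. u < F x) at_top" using assms by (rule order_tendstoD)
  then obtain x where "u < F x" by (auto simp: eventually_at_top_linorder)
  then show ?thesis by (auto intro: less_imp_le)
qed

lemma ex_F_less:
  assumes "0 < u" shows "\<exists>x. F x < u"
proof -
  interpret D: real_distribution "distr M borel (X 1)" by simp
  have "(F \<longlongrightarrow> 0) at_bot" using D.cdf_lim_at_bot cdf_distr_X[of 1] by simp
  then have "eventually (\<lambda>x. F x < u) at_bot" using assms by (rule order_tendstoD)
  then show ?thesis by (auto simp: eventually_at_bot_linorder)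
qed

lemma prob_mean_deviation_le:
  assumes [measurable]: "g \<in> borel_measurable borel"
    and "\<And>x. lo \<le> g x \<and> g x \<le> hi" "lo < hi" "0 < N" "0 \<le> \<epsilon>"
  shows "prob {\<omega> \<in> space M. \<epsilon> \<le> \<bar>(\<Sum>j\<in>{1..N}. g (X j \<omega>)) / real N - expectation (\<lambda>\<omega>. g (X 1 \<omega>))\<bar>}
    \<le> 2 * exp (- 2 * real N * \<epsilon>\<^sup>2 / (hi - lo)\<^sup>2)"
proof -
  interpret Hoeffding_ineq_iid M "{1..N}" "\<lambda>j \<omega>. g (X j \<omega>)" "\<lambda>\<omega>. g (X 1 \<omega>)" lo hi
    "expectation (\<lambda>\<omega>. g (X 1 \<omega>))"
  proof unfold_locales
    show "finite {1..N}" by simp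
    show "random_variable borel (\<lambda>\<omega>. g (X 1 \<omega>))" by measurable
    show "AE \<omega> in M. g (X 1 \<omega>) \<in> {lo..hi}" using assms(2) by simp
    have "indep_vars (\<lambda>_. borel) X {1..N}" using indep by (rule indep_vars_subset) auto
    then show "indep_vars (\<lambda>_. borel) (\<lambda>j \<omega>. g (X j \<omega>)) {1..N}"
      by (rule indep_vars_compose2) simp
  next
    fix j assume j: "j \<in> {1..N}"
    then have "distr M borel (X j) = distr M borel (X 1)" by (intro distr_X_eq) simp
    then have "distr (distr M borel (X j)) borel g = distr (distr M borel (X 1)) borel g"
      by (rule arg_cong)
    then show "distr M borel (\<lambda>\<omega>. g (X j \<omega>)) = distr M borel (\<lambda>\<omega>. g (X 1 \<omega>))"
      using j by (simp add: distr_distr comp_def)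
  qed
  have "{1..N} \<noteq> {}" using \<open>0 < N\<close> by simp
  from Hoeffding_ineq_abs_ge'[OF \<open>0 \<le> \<epsilon>\<close> \<open>lo < hi\<close> this] show ?thesis
    by (simp only: card_atLeastAtMost diff_Suc_1)
qed

lemma prob_empirical_cdf_deviation_le:
  assumes "0 < N" "0 \<le> \<epsilon>"
  shows "prob {\<omega> \<in> space M. \<epsilon> \<le> \<bar>empirical_cdf X N x \<omega> - F x\<bar>} \<le> 2 * exp (- 2 * real N * \<epsilon>\<^sup>2)"
proof -
  have indicator: "of_bool (v \<le> x) = indicator {..x} v" for v :: real
    by (simp add: indicator_def)
  have "expectation (\<lambda>\<omega>. indicator {..x} (X 1 \<omega>)) = prob (X 1 -` {..x} \<inter> space M)"
    by (simp flip: indicator_vimage)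
  also have "X 1 -` {..x} \<inter> space M = {\<omega> \<in> space M. X 1 \<omega> \<le> x}" by auto
  also have "prob \<dots> = F x" by (simp add: cdf_eq)
  finally have "expectation (\<lambda>\<omega>. indicator {..x} (X 1 \<omega>)) = F x" .
  moreover have "prob {\<omega> \<in> space M. \<epsilon> \<le> \<bar>(\<Sum>j\<in>{1..N}. indicator {..x} (X j \<omega>)) / real N
        - expectation (\<lambda>\<omega>. indicator {..x} (X 1 \<omega>))\<bar>} \<le> 2 * exp (- 2 * real N * \<epsilon>\<^sup>2 / (1 - 0)\<^sup>2)"
    by (rule prob_mean_deviation_le) (simp_all add: assms)
  ultimately show ?thesis unfolding empirical_cdf_def indicator by simp
qed

lemma borel_measurable_sum_X [measurable]:
  fixes g :: "real \<Rightarrow> real"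
  assumes [measurable]: "g \<in> borel_measurable borel"
  shows "(\<lambda>\<omega>. \<Sum>j\<in>{1..N}. g (X j \<omega>)) \<in> borel_measurable M"
  by (rule borel_measurable_sum) simp

lemma borel_measurable_empirical_cdf [measurable]:
  "(\<lambda>\<omega>. empirical_cdf X N x \<omega>) \<in> borel_measurable M"
proof -
  have "(\<lambda>\<omega>. \<Sum>j\<in>{1..N}. indicator {..x} (X j \<omega>) :: real) \<in> borel_measurable M"
    by measurable
  then show ?thesis
    unfolding empirical_cdf_def by (simp add: indicator_def)
qed

lemma prob_winsor_moment_est_deviation_le:
  fixes \<alpha> \<beta> a b d \<delta> t :: real and N r :: nat
  defines "B \<equiv> max \<bar>a\<bar> \<bar>b\<bar> + 1"
    and "\<mu> \<equiv> expectation (\<lambda>\<omega>. winsor a b (X 1 \<omega>) ^ r)"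
  assumes growth_a: "quantile_growth F \<alpha> a d \<delta>" and growth_b: "quantile_growth F \<beta> b d \<delta>"
    and "a \<le> b" "0 \<le> \<alpha>" "\<alpha> \<le> \<beta>" "\<beta> \<le> 1"
    and km: "nat \<lfloor>\<alpha> * real N\<rfloor> + 1 < nat \<lfloor>\<beta> * real N\<rfloor>"
    and t: "0 < t" "t < \<delta>" "t \<le> 1" "2 \<le> real N * d * t"
  shows "prob {\<omega> \<in> space M. (real r * B ^ (r - 1) + 1) * t < \<bar>winsor_moment_est X \<alpha> \<beta> r N \<omega> - \<mu>\<bar>}
    \<le> 2 * exp (- 2 * real N * t\<^sup>2 / (2 * B ^ r)\<^sup>2) + 8 * exp (- 2 * real N * (d * t / 2)\<^sup>2)"
proof -
  define e where "e = d * t / 2"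
  define g where "g v = winsor a b v ^ r" for v
  define P where "P = {a + t, a - t, b + t, b - t}"
  define mean_dev where "mean_dev = {\<omega> \<in> space M. t \<le> \<bar>(\<Sum>j\<in>{1..N}. g (X j \<omega>)) / real N - \<mu>\<bar>}"
  define cdf_dev where "cdf_dev x = {\<omega> \<in> space M. e \<le> \<bar>empirical_cdf X N x \<omega> - F x\<bar>}" for x
  have "0 < N" using km by (cases N) simp_all
  have "0 < real N * e" using t(4) by (simp add: e_def)
  then have "0 < e" by (simp add: zero_less_mult_iff)
  have g_measurable [measurable]: "g \<in> borel_measurable borel"
    unfolding g_def winsor_def by measurable
  have [measurable]: "mean_dev \<in> sets M" "cdf_dev x \<in> sets M" for x
    unfolding mean_dev_def cdf_dev_def by measurable
  have "{\<omega> \<in> space M. (real r * B ^ (r - 1) + 1) * t < \<bar>winsor_moment_est X \<alpha> \<beta> r N \<omega> - \<mu>\<bar>}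
      \<subseteq> mean_dev \<union> (\<Union>x\<in>P. cdf_dev x)"
  proof (rule subsetI, rule ccontr)
    fix \<omega>
    assume bad: "\<omega> \<in> {\<omega> \<in> space M. (real r * B ^ (r - 1) + 1) * t < \<bar>winsor_moment_est X \<alpha> \<beta> r N \<omega> - \<mu>\<bar>}"
      and "\<omega> \<notin> mean_dev \<union> (\<Union>x\<in>P. cdf_dev x)"
    then have "\<bar>(\<Sum>j\<in>{1..N}. winsor a b (X j \<omega>) ^ r) / real N - \<mu>\<bar> \<le> t"
      and "\<And>x. x \<in> {a + t, a - t, b + t, b - t} \<Longrightarrow> \<bar>empirical_cdf X N x \<omega> - F x\<bar> < d * t / 2"
      by (auto simp: mean_dev_def cdf_dev_def g_def P_def e_def)
    from winsor_moment_est_close[OF growth_a growth_b \<open>a \<le> b\<close> assms(6-9) t this]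
    show False using bad by (simp add: B_def)
  qed
  then have "prob {\<omega> \<in> space M. (real r * B ^ (r - 1) + 1) * t < \<bar>winsor_moment_est X \<alpha> \<beta> r N \<omega> - \<mu>\<bar>}
      \<le> prob (mean_dev \<union> (\<Union>x\<in>P. cdf_dev x))"
    by (intro finite_measure_mono) (auto simp: P_def)
  also have "\<dots> \<le> prob mean_dev + (\<Sum>x\<in>P. prob (cdf_dev x))"
    by (intro order_trans[OF measure_Un_le] add_left_mono finite_measure_subadditive_finite)
      (auto simp: P_def)
  also have "\<dots> \<le> 2 * exp (- 2 * real N * t\<^sup>2 / (2 * B ^ r)\<^sup>2) + (\<Sum>x\<in>P. 2 * exp (- 2 * real N * e\<^sup>2))"
  proof (intro add_mono sum_mono)
    have "\<bar>g v\<bar> \<le> B ^ r" for v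
      using abs_winsor_le[OF \<open>a \<le> b\<close>, of v] by (auto simp: g_def B_def power_abs intro: power_mono)
    then have "- (B ^ r) \<le> g v \<and> g v \<le> B ^ r" for v
      unfolding abs_le_iff by (meson minus_le_iff)
    moreover have "- (B ^ r) < B ^ r" by (simp add: B_def)
    ultimately show "prob mean_dev \<le> 2 * exp (- 2 * real N * t\<^sup>2 / (2 * B ^ r)\<^sup>2)"
      using prob_mean_deviation_le[OF g_measurable _ _ \<open>0 < N\<close>, of "- (B ^ r)" "B ^ r" t] t(1)
      by (simp add: mean_dev_def \<mu>_def g_def)
    show "prob (cdf_dev x) \<le> 2 * exp (- 2 * real N * e\<^sup>2)" for x
      unfolding cdf_dev_def using \<open>0 < e\<close>
      by (intro prob_empirical_cdf_deviation_le \<open>0 < N\<close>) simp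
  qed
  also have "(\<Sum>x\<in>P. 2 * exp (- 2 * real N * e\<^sup>2)) \<le> 8 * exp (- 2 * real N * e\<^sup>2)"
  proof -
    have "card P \<le> 4" by (simp add: P_def card_insert_if)
    then show ?thesis by simp
  qed
  finally show ?thesis by (simp add: e_def)
qed

lemma prob_winsor_moment_est_deviation_le_powr:
  fixes \<alpha> \<beta> a b d \<delta> c C :: real and N r :: nat
  defines "B \<equiv> max \<bar>a\<bar> \<bar>b\<bar> + 1" and "t \<equiv> C * sqrt (ln (real N) / real N)"
  assumes growth_a: "quantile_growth F \<alpha> a d \<delta>" and growth_b: "quantile_growth F \<beta> b d \<delta>"
    and "a \<le> b" "0 \<le> \<alpha>" "\<alpha> \<le> \<beta>" "\<beta> \<le> 1"
    and km: "nat \<lfloor>\<alpha> * real N\<rfloor> + 1 < nat \<lfloor>\<beta> * real N\<rfloor>"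
    and "2 \<le> N" "0 < C" "t < \<delta>" "t \<le> 1" "2 \<le> real N * d * t"
    and rate1: "c \<le> 2 * C\<^sup>2 / (2 * B ^ r)\<^sup>2" and rate2: "c \<le> d\<^sup>2 * C\<^sup>2 / 2"
  shows "prob {\<omega> \<in> space M. (real r * B ^ (r - 1) + 1) * t
      < \<bar>winsor_moment_est X \<alpha> \<beta> r N \<omega> - expectation (\<lambda>\<omega>. winsor a b (X 1 \<omega>) ^ r)\<bar>}
    \<le> 10 * real N powr (- c)"
proof -
  have "0 < ln (real N)" using \<open>2 \<le> N\<close> by simp
  then have "0 < t" using \<open>2 \<le> N\<close> \<open>0 < C\<close> by (simp add: t_def)
  have "t\<^sup>2 = C\<^sup>2 * ln (real N) / real N"
    using \<open>0 < ln (real N)\<close> \<open>2 \<le> N\<close> by (simp add: t_def power_mult_distrib)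
  then have eq1: "- 2 * real N * t\<^sup>2 / (2 * B ^ r)\<^sup>2 = - (2 * C\<^sup>2 / (2 * B ^ r)\<^sup>2 * ln (real N))"
    and eq2: "- 2 * real N * (d * t / 2)\<^sup>2 = - (d\<^sup>2 * C\<^sup>2 / 2 * ln (real N))"
    using \<open>2 \<le> N\<close> by (simp_all add: field_simps power_mult_distrib)
  have "- 2 * real N * t\<^sup>2 / (2 * B ^ r)\<^sup>2 \<le> - (c * ln (real N))"
    unfolding eq1 neg_le_iff_le using rate1 \<open>0 < ln (real N)\<close> by (intro mult_right_mono) auto
  then have "exp (- 2 * real N * t\<^sup>2 / (2 * B ^ r)\<^sup>2) \<le> real N powr (- c)"
    using \<open>2 \<le> N\<close> by (intro exp_le_powr_neg) auto
  moreover have "- 2 * real N * (d * t / 2)\<^sup>2 \<le> - (c * ln (real N))"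
    unfolding eq2 neg_le_iff_le using rate2 \<open>0 < ln (real N)\<close> by (intro mult_right_mono) auto
  then have "exp (- 2 * real N * (d * t / 2)\<^sup>2) \<le> real N powr (- c)"
    using \<open>2 \<le> N\<close> by (intro exp_le_powr_neg) auto
  ultimately have "2 * exp (- 2 * real N * t\<^sup>2 / (2 * B ^ r)\<^sup>2) + 8 * exp (- 2 * real N * (d * t / 2)\<^sup>2)
      \<le> 10 * real N powr (- c)"
    by linarith
  then show ?thesis
    unfolding B_def
    by (rule order_trans[OF prob_winsor_moment_est_deviation_le[OF growth_a growth_b assms(5-9)
          \<open>0 < t\<close> assms(12-14), where r = r]])
qed

lemma winsor_moment_concentration:
  assumes growth_a: "quantile_growth F \<alpha> a d \<delta>" and growth_b: "quantile_growth F \<beta> b d \<delta>"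
    and "0 < d" "0 < \<delta>" "0 \<le> \<alpha>" "\<alpha> < \<beta>" "\<beta> \<le> 1" "0 < c"
  shows "\<exists>A>0. (\<lambda>N. prob {\<omega> \<in> space M.
      \<bar>winsor_moment_est X \<alpha> \<beta> r N \<omega> - expectation (\<lambda>\<omega>. winsor a b (X 1 \<omega>) ^ r)\<bar>
        > A * sqrt (ln (real N) / real N)}) \<in> O(\<lambda>N. real N powr (- c))"
proof -
  have "a \<le> b"
    using quantile_growth_le[OF mono_F growth_a growth_b] assms(3-6) by simp
  define B where "B = max \<bar>a\<bar> \<bar>b\<bar> + 1"
  define K where "K = real r * B ^ (r - 1) + 1"
  define D where "D = (2 * B ^ r)\<^sup>2"
  define C where "C = sqrt (c * (D / 2 + 2 / d\<^sup>2))"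
  define s where "s N = sqrt (ln (real N) / real N)" for N :: nat
  have "0 < B" by (simp add: B_def add_nonneg_pos)
  then have "0 < D" "0 < K" by (simp_all add: D_def K_def add_nonneg_pos)
  have C2: "C\<^sup>2 = c * (D / 2 + 2 / d\<^sup>2)"
    unfolding C_def using \<open>0 < c\<close> \<open>0 < D\<close> by (intro real_sqrt_pow2) simp
  have "0 < C"
    unfolding C_def using \<open>0 < c\<close> \<open>0 < D\<close> \<open>0 < d\<close>
    by (intro real_sqrt_gt_zero mult_pos_pos add_pos_pos) auto
  have rate1: "c \<le> 2 * C\<^sup>2 / D" and rate2: "c \<le> d\<^sup>2 * C\<^sup>2 / 2"
    using \<open>0 < c\<close> \<open>0 < D\<close> \<open>0 < d\<close> unfolding C2 by (simp_all add: field_simps)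
  have "eventually (\<lambda>N. C * s N < min \<delta> 1) sequentially"
    using tendsto_mult_right_zero[OF tendsto_sqrt_ln_div, of C] \<open>0 < \<delta>\<close>
    unfolding s_def by (intro order_tendstoD) auto
  moreover have "eventually (\<lambda>N. 2 / (C * d) \<le> real N * s N) sequentially"
    using filterlim_mult_sqrt_ln_div unfolding s_def filterlim_at_top by blast
  moreover note eventually_ge_at_top[of 2] eventually_floor_mult_less[OF assms(5,6)]
  ultimately have "eventually (\<lambda>N. norm (prob {\<omega> \<in> space M.
      \<bar>winsor_moment_est X \<alpha> \<beta> r N \<omega> - expectation (\<lambda>\<omega>. winsor a b (X 1 \<omega>) ^ r)\<bar>
        > K * C * sqrt (ln (real N) / real N)}) \<le> 10 * norm (real N powr (- c))) sequentially"
  proof eventually_elim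
    case (elim N)
    have "2 \<le> real N * d * (C * s N)"
      using elim(2) \<open>0 < C\<close> \<open>0 < d\<close> by (simp add: field_simps)
    then show ?case
      using prob_winsor_moment_est_deviation_le_powr[OF growth_a growth_b \<open>a \<le> b\<close> assms(5)
          _ assms(7) elim(4) elim(3) \<open>0 < C\<close>, where r = r and c = c] elim(1) assms(6) rate1 rate2
      by (simp add: s_def K_def B_def D_def mult.assoc)
  qed
  then show ?thesis
    using \<open>0 < K\<close> \<open>0 < C\<close> by (intro exI[of _ "K * C"] conjI bigoI) auto
qed

end

theorem lemma6p2:
  fixes M :: "'a measure" and X :: "nat \<Rightarrow> 'a \<Rightarrow> real"
    and F f :: "real \<Rightarrow> real" and \<alpha> \<beta> :: real and r :: nat
  assumes "prob_space M"
    and indep: "prob_space.indep_vars M (\<lambda>_. borel) X {1..}"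
    and distr: "\<And>i x. i \<ge> 1 \<Longrightarrow> measure M {\<omega> \<in> space M. X i \<omega> \<le> x} = F x"
    and "0 < \<alpha>" "\<alpha> < \<beta>" "\<beta> < 1"
    and nbhd: "\<And>\<xi>. \<xi> \<in> {quantile F \<alpha>, quantile F \<beta>} \<Longrightarrow>
       \<exists>\<delta>>0. \<exists>L. (\<forall>x\<in>ball \<xi> \<delta>. (F has_real_derivative f x) (at x)) \<and>
              (\<forall>x\<in>ball \<xi> \<delta>. \<forall>y\<in>ball \<xi> \<delta>. \<bar>f x - f y\<bar> \<le> L * \<bar>x - y\<bar>)"
    and "f (quantile F \<alpha>) > 0" "f (quantile F \<beta>) > 0"
    and "r > 0"
  shows "\<forall>c>0. \<exists>A>0.
    (\<lambda>N. measure M {\<omega> \<in> space M.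
        \<bar>winsor_moment_est X \<alpha> \<beta> r N \<omega>
         - prob_space.expectation M (\<lambda>\<omega>. winsor (quantile F \<alpha>) (quantile F \<beta>) (X 1 \<omega>) ^ r)\<bar>
        > A * sqrt (ln (real N) / real N)})
    \<in> O(\<lambda>N. real N powr (- c))"
proof -
  interpret iid_sample M X F
    using assms(1) indep distr by (intro iid_sample.intro iid_sample_axioms.intro) auto
  have deriv: "(F has_real_derivative f \<xi>) (at \<xi>)" if "\<xi> \<in> {quantile F \<alpha>, quantile F \<beta>}" for \<xi>
    using nbhd[OF that] by (metis centre_in_ball)
  have "\<exists>\<delta>>0. quantile_growth F u (quantile F u) (f (quantile F u) / 2) \<delta>"
    if "u \<in> {\<alpha>, \<beta>}" "0 < f (quantile F u)" for u
    using that assms(4-6) deriv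
    by (intro quantile_growth_if_deriv mono_F ex_F_ge ex_F_less) auto
  then obtain \<delta>a \<delta>b where "0 < \<delta>a" "0 < \<delta>b"
    and growth_a: "quantile_growth F \<alpha> (quantile F \<alpha>) (f (quantile F \<alpha>) / 2) \<delta>a"
    and growth_b: "quantile_growth F \<beta> (quantile F \<beta>) (f (quantile F \<beta>) / 2) \<delta>b"
    using assms(8,9) by blast
  define d where "d = min (f (quantile F \<alpha>)) (f (quantile F \<beta>)) / 2"
  have "0 < d" "d \<le> f (quantile F \<alpha>) / 2" "d \<le> f (quantile F \<beta>) / 2"
    using assms(8,9) by (auto simp: d_def)
  then have "quantile_growth F \<alpha> (quantile F \<alpha>) d (min \<delta>a \<delta>b)"
    and "quantile_growth F \<beta> (quantile F \<beta>) d (min \<delta>a \<delta>b)"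
    using growth_a growth_b by (auto elim: quantile_growth_mono)
  then show ?thesis
    using winsor_moment_concentration \<open>0 < d\<close> \<open>0 < \<delta>a\<close> \<open>0 < \<delta>b\<close> assms(4-6) by simp
qed

end
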